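(* Let $\mathscr{C}$ be a 2-complex containing no 3-book, and let $k$ be the number of singular nodes of $\mathscr{C}$. Let $G$ be a graph and let $G'$ be the graph obtained from $G$ by subdividing each edge exactly $k$ times. Then $G$ has an embedding into $\mathscr{C}$ if and only if $G'$ has an embedding $\Gamma'$ into $\mathscr{C}$ such that every singular node of $\mathscr{C}$ lying in the image of $\Gamma'$ is the image under $\Gamma'$ of a vertex of $G'$.
   Context: A 2-complex is an abstract simplicial complex of dimension at most two (nodes, segments, triangles), identified with its geometric realization. A 2-complex contains a 3-book if some three distinct triangles share a common segment. Let $p$ be a node. A cone at $p$ is a cyclic sequence of triangles $t_1,\dots,t_k,t_{k+1}=t_1$ all incident to $p$ such that for each $i$, $t_i$ and $t_{i+1}$ share a segment incident with $p$, and any other pair of these triangles has only $p$ in common. A corner at $p$ is an inclusionwise maximal (non-cyclic) sequence of triangles $t_1,\dots,t_k$ all incident to $p$ such that for $i=1,\dots,k-1$, $t_i$ and $t_{i+1}$ share a segment incident with $p$, and any other pair has only $p$ in common. An isolated segment at $p$ is a segment incident to $p$ but to no triangle. If $\mathscr{C}$ has no 3-book, the segments and triangles incident with $p$ are uniquely partitioned into cones, corners and isolated segments; $p$ is regular if all of them form a single cone or a single corner, and singular otherwise. Graphs are finite, may have loops and multiple edges; embeddings are injective continuous maps. *)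

theory Defs
  imports "HOL-Analysis.Analysis"
begin

definition two_complex :: "'v set set \<Rightarrow> bool" where
  "two_complex C \<longleftrightarrow> finite C \<and>
     (\<forall>s\<in>C. finite s \<and> s \<noteq> {} \<and> card s \<le> 3) \<and>
     (\<forall>s\<in>C. \<forall>t. t \<subseteq> s \<and> t \<noteq> {} \<longrightarrow> t \<in> C)"

definition nodes :: "'v set set \<Rightarrow> 'v set" where
  "nodes C = {p. {p} \<in> C}"

definition segments :: "'v set set \<Rightarrow> 'v set set" where
  "segments C = {s\<in>C. card s = 2}"

definition triangles :: "'v set set \<Rightarrow> 'v set set" where
  "triangles C = {t\<in>C. card t = 3}"

definition has_3book :: "'v set set \<Rightarrow> bool" where
  "has_3book C \<longleftrightarrow> (\<exists>s\<in>segments C. \<exists>t1 t2 t3.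
      t1 \<in> triangles C \<and> t2 \<in> triangles C \<and> t3 \<in> triangles C \<and>
      s \<subseteq> t1 \<and> s \<subseteq> t2 \<and> s \<subseteq> t3 \<and> t1 \<noteq> t2 \<and> t1 \<noteq> t3 \<and> t2 \<noteq> t3)"

text \<open>Geometric realization: barycentric coordinate functions whose support is a simplex.
The ambient space \<open>'v \<Rightarrow> real\<close> carries the product topology.\<close>
definition realization :: "'v set set \<Rightarrow> ('v \<Rightarrow> real) set" where
  "realization C = {x. (\<forall>v. 0 \<le> x v) \<and> {v. x v \<noteq> 0} \<in> C \<and> sum x {v. x v \<noteq> 0} = 1}"

definition node_point :: "'v \<Rightarrow> ('v \<Rightarrow> real)" where
  "node_point p = (\<lambda>v. if v = p then 1 else 0)"

definition share_seg_at :: "'v \<Rightarrow> 'v set \<Rightarrow> 'v set \<Rightarrow> bool" where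
  "share_seg_at p t t' \<longleftrightarrow> p \<in> t \<inter> t' \<and> card (t \<inter> t') = 2"

definition is_cone_at :: "'v set set \<Rightarrow> 'v \<Rightarrow> 'v set list \<Rightarrow> bool" where
  "is_cone_at C p ts \<longleftrightarrow> length ts \<ge> 3 \<and> distinct ts \<and>
     (\<forall>t\<in>set ts. t \<in> triangles C \<and> p \<in> t) \<and>
     (\<forall>i<length ts. share_seg_at p (ts ! i) (ts ! ((i + 1) mod length ts))) \<and>
     (\<forall>i<length ts. \<forall>j<length ts. i \<noteq> j \<and> j \<noteq> (i + 1) mod length ts \<and>
         i \<noteq> (j + 1) mod length ts \<longrightarrow> ts ! i \<inter> ts ! j = {p})"

definition is_chain_at :: "'v set set \<Rightarrow> 'v \<Rightarrow> 'v set list \<Rightarrow> bool" where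
  "is_chain_at C p ts \<longleftrightarrow> length ts \<ge> 1 \<and> distinct ts \<and>
     (\<forall>t\<in>set ts. t \<in> triangles C \<and> p \<in> t) \<and>
     (\<forall>i. i + 1 < length ts \<longrightarrow> share_seg_at p (ts ! i) (ts ! (i + 1))) \<and>
     (\<forall>i<length ts. \<forall>j<length ts. i \<noteq> j \<and> j \<noteq> i + 1 \<and> i \<noteq> j + 1
         \<longrightarrow> ts ! i \<inter> ts ! j = {p})"

definition is_corner_at :: "'v set set \<Rightarrow> 'v \<Rightarrow> 'v set list \<Rightarrow> bool" where
  "is_corner_at C p ts \<longleftrightarrow> is_chain_at C p ts \<and>
     \<not> (\<exists>us. is_chain_at C p us \<and> set ts \<subset> set us)"

definition isolated_segment_at :: "'v set set \<Rightarrow> 'v \<Rightarrow> 'v set \<Rightarrow> bool" where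
  "isolated_segment_at C p s \<longleftrightarrow> s \<in> segments C \<and> p \<in> s \<and>
     \<not> (\<exists>t\<in>triangles C. s \<subseteq> t)"

text \<open>A node is regular iff all segments and triangles incident with it form a single
cone or a single corner (i.e. the partition into cones, corners and isolated segments
consists of exactly one part, which is a cone or a corner).\<close>
definition regular_node :: "'v set set \<Rightarrow> 'v \<Rightarrow> bool" where
  "regular_node C p \<longleftrightarrow> p \<in> nodes C \<and>
     (\<exists>ts. (is_cone_at C p ts \<or> is_corner_at C p ts) \<and>
        set ts = {t\<in>triangles C. p \<in> t} \<and>
        (\<forall>s\<in>segments C. p \<in> s \<longrightarrow> (\<exists>t\<in>set ts. s \<subseteq> t)))"

definition singular_nodes :: "'v set set \<Rightarrow> 'v set" where
  "singular_nodes C = {p\<in>nodes C. \<not> regular_node C p}"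

definition graph :: "'a set \<Rightarrow> 'e set \<Rightarrow> ('e \<Rightarrow> 'a \<times> 'a) \<Rightarrow> bool" where
  "graph V E ends \<longleftrightarrow> finite V \<and> finite E \<and> (\<forall>e\<in>E. fst (ends e) \<in> V \<and> snd (ends e) \<in> V)"

text \<open>An embedding (injective continuous map of the topological realization of the
graph) into a space \<open>X\<close>, given by its restriction to vertices (\<open>\<phi>\<close>) and to the closed
edges (\<open>\<gamma> e\<close> parametrized by [0,1]).\<close>
definition graph_embedding ::
  "'a set \<Rightarrow> 'e set \<Rightarrow> ('e \<Rightarrow> 'a \<times> 'a) \<Rightarrow> ('x::topological_space) set
     \<Rightarrow> ('a \<Rightarrow> 'x) \<Rightarrow> ('e \<Rightarrow> real \<Rightarrow> 'x) \<Rightarrow> bool" where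
  "graph_embedding V E ends X \<phi> \<gamma> \<longleftrightarrow>
     \<phi> ` V \<subseteq> X \<and> inj_on \<phi> V \<and>
     (\<forall>e\<in>E. simple_path (\<gamma> e) \<and> path_image (\<gamma> e) \<subseteq> X \<and>
        pathstart (\<gamma> e) = \<phi> (fst (ends e)) \<and> pathfinish (\<gamma> e) = \<phi> (snd (ends e)) \<and>
        \<gamma> e ` {0<..<1} \<inter> \<phi> ` V = {}) \<and>
     (\<forall>e\<in>E. \<forall>e'\<in>E. e \<noteq> e' \<longrightarrow> \<gamma> e ` {0<..<1} \<inter> \<gamma> e' ` {0<..<1} = {})"

definition graph_image ::
  "'a set \<Rightarrow> 'e set \<Rightarrow> ('a \<Rightarrow> 'x::topological_space) \<Rightarrow> ('e \<Rightarrow> real \<Rightarrow> 'x) \<Rightarrow> 'x set" where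
  "graph_image V E \<phi> \<gamma> = \<phi> ` V \<union> (\<Union>e\<in>E. path_image (\<gamma> e))"

text \<open>New vertices: \<open>Inl a\<close> for old vertices, \<open>Inr (e,i)\<close>, \<open>1 \<le> i \<le> k\<close>, for the
subdivision vertices of edge \<open>e\<close>; edge \<open>e\<close> becomes the path of edges \<open>(e,0),\<dots>,(e,k)\<close>.\<close>
definition subdiv_V :: "'a set \<Rightarrow> 'e set \<Rightarrow> nat \<Rightarrow> ('a + 'e \<times> nat) set" where
  "subdiv_V V E k = Inl ` V \<union> Inr ` (E \<times> {1..k})"

definition subdiv_E :: "'e set \<Rightarrow> nat \<Rightarrow> ('e \<times> nat) set" where
  "subdiv_E E k = E \<times> {0..k}"

definition subdiv_pt :: "('e \<Rightarrow> 'a \<times> 'a) \<Rightarrow> nat \<Rightarrow> 'e \<Rightarrow> nat \<Rightarrow> 'a + 'e \<times> nat" where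
  "subdiv_pt ends k e i =
     (if i = 0 then Inl (fst (ends e)) else if i = k + 1 then Inl (snd (ends e)) else Inr (e, i))"

definition subdiv_ends :: "('e \<Rightarrow> 'a \<times> 'a) \<Rightarrow> nat \<Rightarrow> 'e \<times> nat \<Rightarrow> ('a + 'e \<times> nat) \<times> ('a + 'e \<times> nat)" where
  "subdiv_ends ends k = (\<lambda>(e, j). (subdiv_pt ends k e j, subdiv_pt ends k e (j + 1)))"

end

theory Submission
  imports Defs
begin

(* Subdividing edges never destroys embeddability: an embedded edge is cut into k + 1 consecutive
   subarcs, and conversely the k + 1 arcs of a subdivided edge concatenate to a simple path whose
   interior avoids every other vertex and edge. For the side condition, an embedded edge is a simple
   path, so it passes through each of the at most k singular nodes at most once in its interior;
   placing the k subdivision points at these parameters (and at arbitrary further interior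
   parameters) makes every singular node on the image a vertex. Neither direction uses the absence
   of 3-books: the count k only needs the singular nodes to be finitely many. *)

section \<open>Subpaths and chains of paths in a topological space\<close>

(* The library's subpath needs a real_normed_vector, but the realization lives in the product
   space 'v \<Rightarrow> real; the same affine reparametrization works in any topological space. *)
definition subpath_top :: "real \<Rightarrow> real \<Rightarrow> (real \<Rightarrow> 'x) \<Rightarrow> real \<Rightarrow> 'x" where
  "subpath_top u v g = (\<lambda>x. g ((v - u) * x + u))"

lemma pathstart_subpath_top [simp]: "pathstart (subpath_top u v g) = g u"
  by (simp add: subpath_top_def pathstart_def)

lemma pathfinish_subpath_top [simp]: "pathfinish (subpath_top u v g) = g v"
  by (simp add: subpath_top_def pathfinish_def)

lemma affine_image_unit_interval:
  fixes u v :: real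
  assumes "u < v"
  shows "(\<lambda>x. (v - u) * x + u) ` {0..1} = {u..v}"
  using assms by (simp add: image_affinity_atLeastAtMost)

lemma affine_image_open_unit_interval:
  fixes u v :: real
  assumes "u < v"
  shows "(\<lambda>x. (v - u) * x + u) ` {0<..<1} = {u<..<v}"
proof (intro equalityI subsetI)
  fix y assume "y \<in> (\<lambda>x. (v - u) * x + u) ` {0<..<1}"
  then obtain x where x: "0 < x" "x < 1" "y = (v - u) * x + u" by auto
  have "0 < (v - u) * x" "(v - u) * x < (v - u) * 1"
    using assms x by (simp_all add: mult_strict_left_mono)
  then show "y \<in> {u<..<v}" using x by simp
next
  fix y assume y: "y \<in> {u<..<v}"
  define x where "x = (y - u) / (v - u)"
  have "y = (v - u) * x + u" "x \<in> {0<..<1}"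
    using assms y by (auto simp: x_def field_simps)
  then show "y \<in> (\<lambda>x. (v - u) * x + u) ` {0<..<1}" by (rule image_eqI)
qed

lemma subpath_top_eq_comp: "subpath_top u v g = g \<circ> (\<lambda>x. (v - u) * x + u)"
  by (simp add: subpath_top_def o_def)

lemma path_image_subpath_top:
  "u < v \<Longrightarrow> path_image (subpath_top u v g) = g ` {u..v}"
  by (simp only: path_image_def subpath_top_eq_comp image_comp[symmetric] affine_image_unit_interval)

lemma subpath_top_image_interior:
  "u < v \<Longrightarrow> subpath_top u v g ` {0<..<1} = g ` {u<..<v}"
  by (simp only: subpath_top_eq_comp image_comp[symmetric] affine_image_open_unit_interval)

lemma simple_path_subpath_top:
  fixes g :: "real \<Rightarrow> 'x::topological_space"
  assumes g: "simple_path g" and uv: "0 \<le> u" "u < v" "v \<le> 1"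
  shows "simple_path (subpath_top u v g)"
proof -
  let ?a = "\<lambda>x::real. (v - u) * x + u"
  have a01: "?a ` {0..1} \<subseteq> {0..1}"
    using uv by (simp add: affine_image_unit_interval)
  have "continuous_on {0..1} (g \<circ> ?a)"
    using continuous_on_subset[OF simple_path_imp_path[OF g, unfolded path_def] a01]
    by (intro continuous_on_compose continuous_intros)
  then have "path (subpath_top u v g)"
    by (simp add: path_def subpath_top_def o_def)
  moreover have "loop_free (subpath_top u v g)"
    unfolding loop_free_def
  proof (intro ballI impI)
    fix x y :: real assume x: "x \<in> {0..1}" and y: "y \<in> {0..1}"
      and eq: "subpath_top u v g x = subpath_top u v g y"
    have "?a x \<in> {0..1}" "?a y \<in> {0..1}"
      using subsetD[OF a01 imageI[OF x]] subsetD[OF a01 imageI[OF y]] by simp_all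
    moreover have "g (?a x) = g (?a y)" using eq by (simp add: subpath_top_def)
    ultimately have "?a x = ?a y \<or> ?a x = 0 \<and> ?a y = 1 \<or> ?a x = 1 \<and> ?a y = 0"
      using g unfolding simple_path_def loop_free_def by blast
    moreover have "z = 0" if "z \<in> {0..1}" "?a z = 0" for z
    proof -
      have "0 \<le> (v - u) * z" using uv that by simp
      then have "(v - u) * z = 0" using uv that by linarith
      then show ?thesis using uv by simp
    qed
    moreover have "z = 1" if "z \<in> {0..1}" "?a z = 1" for z
    proof -
      have "(v - u) * z \<le> (v - u) * 1" using uv that by (intro mult_left_mono) auto
      then have "(v - u) * z = (v - u) * 1" using uv that by (simp add: algebra_simps)
      then show ?thesis using uv by simp
    qed
    ultimately show "x = y \<or> x = 0 \<and> y = 1 \<or> x = 1 \<and> y = 0"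
      using uv x y by auto
  qed
  ultimately show ?thesis by (simp add: simple_path_def)
qed

lemma simple_path_interior_eq:
  assumes "simple_path g" "s \<in> {0<..<1}" "s' \<in> {0..1}" "g s = g s'"
  shows "s = s'"
  using assms by (fastforce simp: simple_path_def loop_free_def)

lemma path_image_eq_interior_ends:
  "path_image g = g ` {0<..<1} \<union> {pathstart g, pathfinish g}"
  unfolding path_image_def pathstart_def pathfinish_def
  by (auto simp: image_iff) (metis greaterThanLessThan_iff order_le_less)

lemma joinpaths_image_interior:
  assumes "pathfinish g1 = pathstart g2"
  shows "(g1 +++ g2) ` {0<..<1} = g1 ` {0<..<1} \<union> {pathstart g2} \<union> g2 ` {0<..<1}"
proof (intro equalityI subsetI)
  fix y assume "y \<in> (g1 +++ g2) ` {0<..<1}"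
  then obtain x :: real where x: "0 < x" "x < 1" "y = (g1 +++ g2) x" by auto
  consider "x < 1/2" | "x = 1/2" | "x > 1/2" by linarith
  then show "y \<in> g1 ` {0<..<1} \<union> {pathstart g2} \<union> g2 ` {0<..<1}"
  proof cases
    case 1 then show ?thesis using x by (auto simp: joinpaths_def)
  next
    case 2
    then have "2 * x = 1" by simp
    then have "y = g1 1" using x by (simp add: joinpaths_def)
    then show ?thesis using assms by (simp add: pathfinish_def)
  next
    case 3 then show ?thesis using x by (auto simp: joinpaths_def)
  qed
next
  fix y assume "y \<in> g1 ` {0<..<1} \<union> {pathstart g2} \<union> g2 ` {0<..<1}"
  then consider s where "0 < s" "s < 1" "y = g1 s" | "y = pathstart g2" | s where "0 < s" "s < 1" "y = g2 s"
    by auto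
  then show "y \<in> (g1 +++ g2) ` {0<..<1}"
  proof cases
    case 1
    then have "y = (g1 +++ g2) (s / 2)" by (simp add: joinpaths_def)
    then show ?thesis using 1 by (intro image_eqI[where x="s / 2"]) auto
  next
    case 2
    then have "y = (g1 +++ g2) (1 / 2)" using assms by (simp add: joinpaths_def pathfinish_def pathstart_def)
    then show ?thesis by (intro image_eqI[where x="1 / 2"]) auto
  next
    case 3
    then have "y = (g1 +++ g2) ((s + 1) / 2)" by (simp add: joinpaths_def field_simps)
    then show ?thesis using 3 by (intro image_eqI[where x="(s + 1) / 2"]) auto
  qed
qed

lemma simple_path_join_interior_disjoint:
  assumes "simple_path g1" "simple_path g2" "pathfinish g1 = pathstart g2"
    and "pathstart g1 \<noteq> pathfinish g1" "pathstart g2 \<noteq> pathfinish g2"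
    and "g1 ` {0<..<1} \<inter> path_image g2 = {}"
    and "pathstart g1 \<in> path_image g2 \<Longrightarrow> pathstart g1 = pathfinish g2"
  shows "simple_path (g1 +++ g2)"
proof -
  have arcs: "arc g1" "arc g2" using assms(1,2,4,5) by (metis simple_path_imp_arc)+
  have meet: "path_image g1 \<inter> path_image g2 \<subseteq> {pathstart g1, pathstart g2}"
    using assms(3,6) path_image_eq_interior_ends[of g1] by auto
  show ?thesis
  proof (cases "pathstart g1 = pathfinish g2")
    case True
    then show ?thesis using simple_path_join_loop[OF arcs assms(3)] meet by auto
  next
    case False
    then have "path_image g1 \<inter> path_image g2 \<subseteq> {pathstart g2}" using meet assms(7) by auto
    then show ?thesis using arc_join[OF arcs assms(3)] arc_imp_simple_path by blast
  qed
qed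

(* The pieces g m, ..., g (m + n) run through p m, ..., p (m + n + 1); these points are distinct
   except that the chain may close up (p m = p (m + n + 1)). *)
definition path_chain :: "(nat \<Rightarrow> real \<Rightarrow> 'x::topological_space) \<Rightarrow> (nat \<Rightarrow> 'x) \<Rightarrow> nat \<Rightarrow> nat \<Rightarrow> bool" where
  "path_chain g p m n \<longleftrightarrow>
     (\<forall>j\<in>{m..m+n}. simple_path (g j) \<and> pathstart (g j) = p j \<and> pathfinish (g j) = p (Suc j)) \<and>
     (\<forall>i\<in>{m..Suc (m+n)}. \<forall>i'\<in>{m..Suc (m+n)}. i < i' \<and> p i = p i' \<longrightarrow> i = m \<and> i' = Suc (m+n)) \<and>
     (\<forall>j\<in>{m..m+n}. \<forall>j'\<in>{m..m+n}. j \<noteq> j' \<longrightarrow> g j ` {0<..<1} \<inter> g j' ` {0<..<1} = {}) \<and>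
     (\<forall>i\<in>{m..Suc (m+n)}. \<forall>j\<in>{m..m+n}. p i \<notin> g j ` {0<..<1})"

lemma path_chain_tail: "path_chain g p m (Suc n) \<Longrightarrow> path_chain g p (Suc m) n"
  unfolding path_chain_def by (intro conjI ballI impI; simp; fastforce)

primrec chain_join :: "(nat \<Rightarrow> real \<Rightarrow> 'x::topological_space) \<Rightarrow> nat \<Rightarrow> nat \<Rightarrow> real \<Rightarrow> 'x" where
  "chain_join g m 0 = g m"
| "chain_join g m (Suc n) = g m +++ chain_join g (Suc m) n"

lemma path_chain_first:
  assumes "path_chain g p m n"
  shows "simple_path (g m)" "pathstart (g m) = p m" "pathfinish (g m) = p (Suc m)"
  using assms by (simp_all add: path_chain_def)

lemma chain_join_ends:
  assumes "path_chain g p m n"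
  shows "pathstart (chain_join g m n) = p m \<and> pathfinish (chain_join g m n) = p (Suc (m + n))"
  using assms
proof (induction n arbitrary: m)
  case 0
  then show ?case using path_chain_first[OF 0] by simp
next
  case (Suc n)
  then show ?case using path_chain_first(2)[OF Suc.prems] Suc.IH[OF path_chain_tail[OF Suc.prems]] by simp
qed

lemma chain_join_images:
  assumes "path_chain g p m n"
  shows "path_image (chain_join g m n) = (\<Union>j\<in>{m..m+n}. g j ` {0<..<1}) \<union> p ` {m..Suc (m+n)} \<and>
    chain_join g m n ` {0<..<1} = (\<Union>j\<in>{m..m+n}. g j ` {0<..<1}) \<union> p ` {Suc m..m+n}"
  using assms
proof (induction n arbitrary: m)
  case 0
  have "{m..Suc m} = {m, Suc m}" by auto
  then show ?case using path_chain_first[OF 0] path_image_eq_interior_ends[of "g m"] by simp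
next
  case (Suc n)
  let ?g2 = "chain_join g (Suc m) n"
  let ?I = "\<lambda>A. \<Union>j\<in>A. g j ` {0<..<1}"
  have tail: "path_chain g p (Suc m) n" by (rule path_chain_tail[OF Suc.prems])
  have IH: "path_image ?g2 = ?I {Suc m..m + Suc n} \<union> p ` {Suc m..Suc (m + Suc n)}"
    "?g2 ` {0<..<1} = ?I {Suc m..m + Suc n} \<union> p ` {Suc (Suc m)..m + Suc n}"
    using Suc.IH[OF tail] by simp_all
  have joins: "pathfinish (g m) = pathstart ?g2" "pathstart ?g2 = p (Suc m)"
    using path_chain_first(3)[OF Suc.prems] chain_join_ends[OF tail] by simp_all
  have split: "{m..m + Suc n} = insert m {Suc m..m + Suc n}"
    "{m..Suc (m + Suc n)} = insert m {Suc m..Suc (m + Suc n)}"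
    "{Suc m..m + Suc n} = insert (Suc m) {Suc (Suc m)..m + Suc n}"
    by auto
  have "path_image (chain_join g m (Suc n)) = path_image (g m) \<union> path_image ?g2"
    using path_image_join[OF joins(1)] by simp
  also have "\<dots> = (g m ` {0<..<1} \<union> ?I {Suc m..m + Suc n}) \<union>
      insert (p m) (insert (p (Suc m)) (p ` {Suc m..Suc (m + Suc n)}))"
    using path_image_eq_interior_ends[of "g m"] path_chain_first(2,3)[OF Suc.prems] IH(1) by auto
  also have "\<dots> = ?I {m..m + Suc n} \<union> p ` {m..Suc (m + Suc n)}"
    unfolding split(1,2) by (simp add: insert_absorb)
  finally have path_img: "path_image (chain_join g m (Suc n)) = ?I {m..m + Suc n} \<union> p ` {m..Suc (m + Suc n)}" .
  have p_split: "p ` {Suc m..m + Suc n} = insert (p (Suc m)) (p ` {Suc (Suc m)..m + Suc n})"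
    by (simp only: split(3) image_insert)
  have "chain_join g m (Suc n) ` {0<..<1} = g m ` {0<..<1} \<union> {p (Suc m)} \<union> ?g2 ` {0<..<1}"
    using joinpaths_image_interior[OF joins(1)] joins(2) by simp
  also have "\<dots> = ?I {m..m + Suc n} \<union> p ` {Suc m..m + Suc n}"
    unfolding IH(2) split(1) p_split by (simp add: Un_ac)
  finally show ?case using path_img by simp
qed

lemma simple_path_chain_join:
  assumes "path_chain g p m n"
  shows "simple_path (chain_join g m n)"
  using assms
proof (induction n arbitrary: m)
  case 0
  then show ?case using path_chain_first[OF 0] by simp
next
  case (Suc n)
  let ?g2 = "chain_join g (Suc m) n"
  have tail: "path_chain g p (Suc m) n" by (rule path_chain_tail[OF Suc.prems])
  note first = path_chain_first[OF Suc.prems]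
  have ends: "pathstart ?g2 = p (Suc m)" "pathfinish ?g2 = p (Suc (m + Suc n))"
    using chain_join_ends[OF tail] by simp_all
  have image: "path_image ?g2 = (\<Union>j\<in>{Suc m..m + Suc n}. g j ` {0<..<1}) \<union> p ` {Suc m..Suc (m + Suc n)}"
    using chain_join_images[OF tail] by simp
  have m: "m \<in> {m..m + Suc n}" by simp
  have distinct: "i = m \<and> i' = Suc (m + Suc n)"
    if "i \<in> {m..Suc (m + Suc n)}" "i' \<in> {m..Suc (m + Suc n)}" "i < i'" "p i = p i'" for i i'
    using Suc.prems that unfolding path_chain_def by blast
  have disjoint: "g m ` {0<..<1} \<inter> g j ` {0<..<1} = {}" if j: "j \<in> {Suc m..m + Suc n}" for j
  proof -
    have "j \<in> {m..m + Suc n}" "m \<noteq> j" using j by auto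
    then show ?thesis using Suc.prems m unfolding path_chain_def by blast
  qed
  have off: "p i \<notin> g j ` {0<..<1}" if "i \<in> {m..Suc (m + Suc n)}" "j \<in> {m..m + Suc n}" for i j
    using Suc.prems that unfolding path_chain_def by blast
  have "g m ` {0<..<1} \<inter> (\<Union>j\<in>{Suc m..m + Suc n}. g j ` {0<..<1}) = {}"
    using disjoint by blast
  moreover have "p i \<notin> g m ` {0<..<1}" if "i \<in> {Suc m..Suc (m + Suc n)}" for i
    using off[OF _ m, of i] that by auto
  then have "g m ` {0<..<1} \<inter> p ` {Suc m..Suc (m + Suc n)} = {}" by force
  ultimately have interior_apart: "g m ` {0<..<1} \<inter> path_image ?g2 = {}"
    unfolding image by (simp add: Int_Un_distrib)
  have closes: "pathstart (g m) = pathfinish ?g2" if "pathstart (g m) \<in> path_image ?g2"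
  proof -
    have "p m \<in> p ` {Suc m..Suc (m + Suc n)}"
      using that first(2) off[of m] unfolding image by force
    then obtain i where "i \<in> {Suc m..Suc (m + Suc n)}" "p m = p i" by auto
    then have "i = Suc (m + Suc n)" using distinct[of m i] by auto
    then show ?thesis using \<open>p m = p i\<close> first(2) ends(2) by simp
  qed
  have joins: "pathfinish (g m) = pathstart ?g2" using first(3) ends(1) by simp
  have "p m \<noteq> p (Suc m)" "p (Suc m) \<noteq> p (Suc (m + Suc n))"
    using distinct[of m "Suc m"] distinct[of "Suc m" "Suc (m + Suc n)"] by auto
  then show ?case
    using simple_path_join_interior_disjoint[OF first(1) Suc.IH[OF tail] joins _ _ interior_apart closes]
      first(2,3) ends by simp
qed

section \<open>Embedded graphs\<close>

locale graph_embedded =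
  fixes V :: "'a set" and E :: "'e set" and ends :: "'e \<Rightarrow> 'a \<times> 'a"
    and X :: "'x::topological_space set" and \<phi> :: "'a \<Rightarrow> 'x" and \<gamma> :: "'e \<Rightarrow> real \<Rightarrow> 'x"
  assumes embedding: "graph_embedding V E ends X \<phi> \<gamma>"
begin

lemma vertices_in: "\<phi> ` V \<subseteq> X"
  using embedding by (simp add: graph_embedding_def)

lemma inj_vertices: "inj_on \<phi> V"
  using embedding by (simp add: graph_embedding_def)

lemma simple_edge: "e \<in> E \<Longrightarrow> simple_path (\<gamma> e)"
  using embedding by (simp add: graph_embedding_def)

lemma edge_in: "e \<in> E \<Longrightarrow> path_image (\<gamma> e) \<subseteq> X"
  using embedding by (simp add: graph_embedding_def)

lemma edge_start: "e \<in> E \<Longrightarrow> \<gamma> e 0 = \<phi> (fst (ends e))"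
  using embedding by (simp add: graph_embedding_def pathstart_def)

lemma edge_finish: "e \<in> E \<Longrightarrow> \<gamma> e 1 = \<phi> (snd (ends e))"
  using embedding by (simp add: graph_embedding_def pathfinish_def)

lemma edge_interior_avoids_vertices: "e \<in> E \<Longrightarrow> \<gamma> e ` {0<..<1} \<inter> \<phi> ` V = {}"
  using embedding by (simp add: graph_embedding_def)

lemma edge_interiors_disjoint:
  "e \<in> E \<Longrightarrow> e' \<in> E \<Longrightarrow> e \<noteq> e' \<Longrightarrow> \<gamma> e ` {0<..<1} \<inter> \<gamma> e' ` {0<..<1} = {}"
  using embedding by (simp add: graph_embedding_def)

lemma edge_interior_point_notin_vertices:
  "e \<in> E \<Longrightarrow> s \<in> {0<..<1} \<Longrightarrow> \<gamma> e s \<notin> \<phi> ` V"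
  using edge_interior_avoids_vertices by blast

lemma edge_interior_point_eq:
  assumes "e \<in> E" "e' \<in> E" "s \<in> {0<..<1}" "s' \<in> {0<..<1}" "\<gamma> e s = \<gamma> e' s'"
  shows "e = e' \<and> s = s'"
proof -
  have "e = e'" using edge_interiors_disjoint[of e e'] assms by blast
  then show ?thesis using simple_path_interior_eq[OF simple_edge] assms by auto
qed

end

section \<open>Subdividing an embedding\<close>

definition unit_partition :: "nat \<Rightarrow> (nat \<Rightarrow> real) \<Rightarrow> bool" where
  "unit_partition k t \<longleftrightarrow> strict_mono t \<and> t 0 = 0 \<and> t (Suc k) = 1"

lemma unit_partition_mem:
  assumes "unit_partition k t" "i \<le> Suc k"
  shows "t i \<in> {0..1}"
proof -
  have t: "strict_mono t" "t 0 = 0" "t (Suc k) = 1" using assms(1) by (simp_all add: unit_partition_def)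
  have "t 0 \<le> t i" "t i \<le> t (Suc k)" using assms(2) strict_mono_less_eq[OF t(1)] by simp_all
  then show ?thesis using t by simp
qed

lemma unit_partition_interior:
  assumes "unit_partition k t" "1 \<le> i" "i \<le> k"
  shows "t i \<in> {0<..<1}"
proof -
  have t: "strict_mono t" "t 0 = 0" "t (Suc k) = 1" using assms(1) by (simp_all add: unit_partition_def)
  have "t 0 < t i" "t i < t (Suc k)" using assms(2,3) strict_mono_less[OF t(1)] by simp_all
  then show ?thesis using t by simp
qed

lemma exists_unit_partition_through:
  fixes S :: "real set"
  assumes "finite S" "S \<subseteq> {0<..<1}" "card S \<le> k"
  shows "\<exists>t. unit_partition k t \<and> S \<subseteq> t ` {1..k}"
proof -
  have "infinite ({0<..<1::real} - S)" using assms(1) by (simp add: Diff_infinite_finite)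
  then obtain B where B: "B \<subseteq> {0<..<1} - S" "finite B" "card B = k - card S"
    using infinite_arbitrarily_large by blast
  define xs where "xs = sorted_list_of_set (S \<union> B)"
  have "S \<inter> B = {}" using B by blast
  then have length_xs: "length xs = k"
    using B assms by (simp add: xs_def card_Un_disjoint)
  have sorted_xs: "sorted_wrt (<) xs" by (simp add: xs_def)
  have set_xs: "set xs = S \<union> B" using B assms by (simp add: xs_def)
  have xs_interior: "xs ! i \<in> {0<..<1}" if "i < k" for i
    using that set_xs B assms length_xs nth_mem by blast
  \<comment> \<open>beyond \<open>k + 1\<close> the values are irrelevant; they only keep \<open>t\<close> strictly increasing\<close>
  define t where "t i = (if i = 0 then 0 else if i \<le> k then xs ! (i - 1) else real i - real k)" for i
  have "t n < t (Suc n)" for n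
  proof -
    consider "n = 0" "k = 0" | "n = 0" "k \<ge> 1" | "1 \<le> n" "n < k" | "n = k" "n \<ge> 1" | "n > k"
      by linarith
    then show ?thesis
    proof cases
      case 3
      then show ?thesis using sorted_wrt_nth_less[OF sorted_xs, of "n - 1" n] length_xs
        by (simp add: t_def)
    qed (use xs_interior[of 0] xs_interior[of "n - 1"] in \<open>auto simp: t_def\<close>)
  qed
  then have "unit_partition k t" by (simp add: unit_partition_def strict_mono_Suc_iff t_def)
  moreover have "S \<subseteq> t ` {1..k}"
  proof
    fix s assume "s \<in> S"
    then have "s \<in> set xs" using set_xs by simp
    then obtain j where j: "j < k" "xs ! j = s" using length_xs by (auto simp: in_set_conv_nth)
    then have "t (Suc j) = s" by (simp add: t_def)
    then show "s \<in> t ` {1..k}" using j by force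
  qed
  ultimately show ?thesis by blast
qed

definition subdiv_vertex_map ::
  "('a \<Rightarrow> 'x) \<Rightarrow> ('e \<Rightarrow> real \<Rightarrow> 'x) \<Rightarrow> ('e \<Rightarrow> nat \<Rightarrow> real) \<Rightarrow> 'a + 'e \<times> nat \<Rightarrow> 'x" where
  "subdiv_vertex_map \<phi> \<gamma> t = case_sum \<phi> (\<lambda>(e, i). \<gamma> e (t e i))"

definition subdiv_edge_map ::
  "('e \<Rightarrow> real \<Rightarrow> 'x) \<Rightarrow> ('e \<Rightarrow> nat \<Rightarrow> real) \<Rightarrow> 'e \<times> nat \<Rightarrow> real \<Rightarrow> 'x" where
  "subdiv_edge_map \<gamma> t = (\<lambda>(e, j). subpath_top (t e j) (t e (Suc j)) (\<gamma> e))"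

locale graph_embedded_partitioned = graph_embedded +
  fixes k :: nat and t :: "'e \<Rightarrow> nat \<Rightarrow> real"
  assumes partition: "e \<in> E \<Longrightarrow> unit_partition k (t e)"
begin

abbreviation "\<phi>' \<equiv> subdiv_vertex_map \<phi> \<gamma> t"
abbreviation "\<gamma>' \<equiv> subdiv_edge_map \<gamma> t"

lemma partition_less: "e \<in> E \<Longrightarrow> i < j \<Longrightarrow> t e i < t e j"
  using partition by (simp add: unit_partition_def strict_mono_less)

lemma partition_le: "e \<in> E \<Longrightarrow> i \<le> j \<Longrightarrow> t e i \<le> t e j"
  using partition by (simp add: unit_partition_def strict_mono_less_eq)

lemma vertex_map_subdiv_pt:
  assumes "e \<in> E" "j \<le> Suc k"
  shows "\<phi>' (subdiv_pt ends k e j) = \<gamma> e (t e j)"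
  using assms partition[of e] edge_start[of e] edge_finish[of e]
  by (auto simp: subdiv_pt_def subdiv_vertex_map_def unit_partition_def)

lemma subdiv_vertex_cases:
  assumes "w \<in> subdiv_V V E k"
  obtains a where "a \<in> V" "w = Inl a" "\<phi>' w = \<phi> a"
  | e i where "e \<in> E" "i \<in> {1..k}" "w = Inr (e, i)" "\<phi>' w = \<gamma> e (t e i)" "t e i \<in> {0<..<1}"
  using assms partition unit_partition_interior
  by (fastforce simp: subdiv_V_def subdiv_vertex_map_def)

lemma inj_subdiv_vertices: "inj_on \<phi>' (subdiv_V V E k)"
proof (rule inj_onI)
  fix w w' assume w: "w \<in> subdiv_V V E k" and w': "w' \<in> subdiv_V V E k" and eq: "\<phi>' w = \<phi>' w'"
  show "w = w'"
  proof (cases rule: subdiv_vertex_cases[OF w]; cases rule: subdiv_vertex_cases[OF w'])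
    fix a a' assume "a \<in> V" "w = Inl a" "\<phi>' w = \<phi> a" "a' \<in> V" "w' = Inl a'" "\<phi>' w' = \<phi> a'"
    then show ?thesis using eq inj_onD[OF inj_vertices] by simp
  next
    fix e i e' i'
    assume "e \<in> E" "i \<in> {1..k}" "w = Inr (e, i)" "\<phi>' w = \<gamma> e (t e i)" "t e i \<in> {0<..<1}"
      and "e' \<in> E" "i' \<in> {1..k}" "w' = Inr (e', i')" "\<phi>' w' = \<gamma> e' (t e' i')" "t e' i' \<in> {0<..<1}"
    then show ?thesis
      using eq edge_interior_point_eq[of e e' "t e i" "t e' i'"] partition[of e]
      by (auto simp: unit_partition_def strict_mono_eq)
  qed (use eq edge_interior_point_notin_vertices in \<open>metis image_eqI\<close>)+
qed

lemma subdiv_edge_interior: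
  assumes "e \<in> E" "j \<le> k"
  shows "\<gamma>' (e, j) ` {0<..<1} = \<gamma> e ` {t e j<..<t e (Suc j)}"
    and "{t e j<..<t e (Suc j)} \<subseteq> {0<..<1}"
proof -
  show "\<gamma>' (e, j) ` {0<..<1} = \<gamma> e ` {t e j<..<t e (Suc j)}"
    by (simp add: subdiv_edge_map_def subpath_top_image_interior partition_less[OF assms(1)])
  show "{t e j<..<t e (Suc j)} \<subseteq> {0<..<1}"
    using unit_partition_mem[OF partition[OF assms(1)], of j]
      unit_partition_mem[OF partition[OF assms(1)], of "Suc j"] assms(2)
    by auto
qed

lemma subdiv_edge:
  assumes "e \<in> E" "j \<le> k"
  shows "simple_path (\<gamma>' (e, j))" and "path_image (\<gamma>' (e, j)) \<subseteq> X"
    and "pathstart (\<gamma>' (e, j)) = \<phi>' (subdiv_pt ends k e j)"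
    and "pathfinish (\<gamma>' (e, j)) = \<phi>' (subdiv_pt ends k e (Suc j))"
proof -
  have t: "t e j \<in> {0..1}" "t e (Suc j) \<in> {0..1}" "t e j < t e (Suc j)"
    using unit_partition_mem[OF partition[OF assms(1)]] partition_less[OF assms(1)] assms(2) by auto
  show "simple_path (\<gamma>' (e, j))"
    using simple_path_subpath_top[OF simple_edge[OF assms(1)]] t by (simp add: subdiv_edge_map_def)
  have "path_image (\<gamma>' (e, j)) = \<gamma> e ` {t e j..t e (Suc j)}"
    using t(3) by (simp add: subdiv_edge_map_def path_image_subpath_top)
  then have "path_image (\<gamma>' (e, j)) \<subseteq> path_image (\<gamma> e)"
    using t(1,2) by (auto simp: path_image_def)
  then show "path_image (\<gamma>' (e, j)) \<subseteq> X" using edge_in[OF assms(1)] by blast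
  show "pathstart (\<gamma>' (e, j)) = \<phi>' (subdiv_pt ends k e j)"
    "pathfinish (\<gamma>' (e, j)) = \<phi>' (subdiv_pt ends k e (Suc j))"
    using vertex_map_subdiv_pt assms by (simp_all add: subdiv_edge_map_def)
qed

lemma subdiv_edge_interior_eq:
  assumes "e \<in> E" "j \<le> k" "e' \<in> E" "s \<in> {t e j<..<t e (Suc j)}" "s' \<in> {0<..<1}" "\<gamma> e s = \<gamma> e' s'"
  shows "e = e' \<and> s = s'"
  using edge_interior_point_eq[OF assms(1,3) _ assms(5,6)] subdiv_edge_interior(2)[OF assms(1,2)] assms(4)
  by blast

lemma subdiv_edge_interior_avoids_vertices:
  assumes "e \<in> E" "j \<le> k"
  shows "\<gamma>' (e, j) ` {0<..<1} \<inter> \<phi>' ` subdiv_V V E k = {}"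
proof -
  have "\<gamma> e s \<noteq> \<phi>' w" if s: "s \<in> {t e j<..<t e (Suc j)}" and w: "w \<in> subdiv_V V E k" for s w
  proof (cases rule: subdiv_vertex_cases[OF w])
    case 1
    then show ?thesis
      using edge_interior_point_notin_vertices[OF assms(1)] subdiv_edge_interior(2)[OF assms] s by force
  next
    case (2 e' i)
    show ?thesis
    proof
      assume "\<gamma> e s = \<phi>' w"
      then have "e = e'" "s = t e i" using subdiv_edge_interior_eq[OF assms 2(1) s 2(5)] 2(4) by auto
      then show False using s partition_le[OF assms(1), of i j] partition_le[OF assms(1), of "Suc j" i]
        by (cases "i \<le> j") auto
    qed
  qed
  then show ?thesis unfolding subdiv_edge_interior(1)[OF assms] by blast
qed

lemma subdiv_edge_interiors_disjoint:
  assumes "e \<in> E" "j \<le> k" "e' \<in> E" "j' \<le> k" "(e, j) \<noteq> (e', j')"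
  shows "\<gamma>' (e, j) ` {0<..<1} \<inter> \<gamma>' (e', j') ` {0<..<1} = {}"
proof -
  have "\<gamma> e s \<noteq> \<gamma> e' s'" if s: "s \<in> {t e j<..<t e (Suc j)}" and s': "s' \<in> {t e' j'<..<t e' (Suc j')}" for s s'
  proof
    assume "\<gamma> e s = \<gamma> e' s'"
    then have "e = e'" "s = s'"
      using subdiv_edge_interior_eq[OF assms(1-3) s] subdiv_edge_interior(2)[OF assms(3,4)] s' by auto
    then show False
      using assms(5) s s' partition_le[OF assms(1), of "Suc j" j'] partition_le[OF assms(1), of "Suc j'" j]
      by (cases "j < j'") auto
  qed
  then show ?thesis unfolding subdiv_edge_interior(1)[OF assms(1,2)] subdiv_edge_interior(1)[OF assms(3,4)] by blast
qed

lemma graph_embedding_subdivision: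
  "graph_embedding (subdiv_V V E k) (subdiv_E E k) (subdiv_ends ends k) X \<phi>' \<gamma>'"
proof -
  have "\<phi>' ` subdiv_V V E k \<subseteq> X"
  proof
    fix y assume "y \<in> \<phi>' ` subdiv_V V E k"
    then obtain w where w: "w \<in> subdiv_V V E k" "y = \<phi>' w" by blast
    show "y \<in> X"
    proof (cases rule: subdiv_vertex_cases[OF w(1)])
      case 1 then show ?thesis using vertices_in w by auto
    next
      case (2 e i)
      then have "y \<in> path_image (\<gamma> e)" using w by (auto simp: path_image_def)
      then show ?thesis using edge_in[OF 2(1)] by blast
    qed
  qed
  moreover have "\<forall>x\<in>subdiv_E E k. simple_path (\<gamma>' x) \<and> path_image (\<gamma>' x) \<subseteq> X \<and>
      pathstart (\<gamma>' x) = \<phi>' (fst (subdiv_ends ends k x)) \<and>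
      pathfinish (\<gamma>' x) = \<phi>' (snd (subdiv_ends ends k x)) \<and>
      \<gamma>' x ` {0<..<1} \<inter> \<phi>' ` subdiv_V V E k = {}"
  proof
    fix x assume x: "x \<in> subdiv_E E k"
    obtain e j where "x = (e, j)" "e \<in> E" "j \<le> k" using x by (auto simp: subdiv_E_def)
    then show "simple_path (\<gamma>' x) \<and> path_image (\<gamma>' x) \<subseteq> X \<and>
      pathstart (\<gamma>' x) = \<phi>' (fst (subdiv_ends ends k x)) \<and>
      pathfinish (\<gamma>' x) = \<phi>' (snd (subdiv_ends ends k x)) \<and>
      \<gamma>' x ` {0<..<1} \<inter> \<phi>' ` subdiv_V V E k = {}"
      using subdiv_edge subdiv_edge_interior_avoids_vertices by (simp add: subdiv_ends_def)
  qed
  moreover have "\<forall>x\<in>subdiv_E E k. \<forall>y\<in>subdiv_E E k. x \<noteq> y \<longrightarrow>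
      \<gamma>' x ` {0<..<1} \<inter> \<gamma>' y ` {0<..<1} = {}"
  proof (intro ballI impI)
    fix x y assume x: "x \<in> subdiv_E E k" and y: "y \<in> subdiv_E E k" and "x \<noteq> y"
    obtain e j e' j' where "x = (e, j)" "e \<in> E" "j \<le> k" "y = (e', j')" "e' \<in> E" "j' \<le> k"
      using x y by (auto simp: subdiv_E_def)
    then show "\<gamma>' x ` {0<..<1} \<inter> \<gamma>' y ` {0<..<1} = {}"
      using subdiv_edge_interiors_disjoint \<open>x \<noteq> y\<close> by blast
  qed
  ultimately show ?thesis
    unfolding graph_embedding_def using inj_subdiv_vertices by (intro conjI)
qed

end

lemma subdiv_pt_in_subdiv_V:
  assumes "graph V E ends" "e \<in> E" "j \<le> Suc k"
  shows "subdiv_pt ends k e j \<in> subdiv_V V E k"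
  using assms by (auto simp: graph_def subdiv_pt_def subdiv_V_def)

lemma subdiv_pt_eq_iff:
  assumes "i \<le> Suc k" "j \<le> Suc k" "i < j"
  shows "subdiv_pt ends k e i = subdiv_pt ends k e j \<longleftrightarrow>
    i = 0 \<and> j = Suc k \<and> fst (ends e) = snd (ends e)"
  using assms by (auto simp: subdiv_pt_def)

lemma (in graph_embedded_partitioned) subdivision_graph_image:
  assumes "graph V E ends"
  shows "graph_image (subdiv_V V E k) (subdiv_E E k) \<phi>' \<gamma>' \<subseteq>
    \<phi>' ` subdiv_V V E k \<union> (\<Union>e\<in>E. \<gamma> e ` ({0<..<1} - t e ` {1..k}))"
proof
  fix y assume "y \<in> graph_image (subdiv_V V E k) (subdiv_E E k) \<phi>' \<gamma>'"
  then consider "y \<in> \<phi>' ` subdiv_V V E k" | e j where "e \<in> E" "j \<le> k" "y \<in> path_image (\<gamma>' (e, j))"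
    unfolding graph_image_def subdiv_E_def by fastforce
  then show "y \<in> \<phi>' ` subdiv_V V E k \<union> (\<Union>e\<in>E. \<gamma> e ` ({0<..<1} - t e ` {1..k}))"
  proof cases
    case edge: 2
    have "t e j < t e (Suc j)" using partition_less[OF edge(1)] by simp
    then obtain s where s: "s \<in> {t e j..t e (Suc j)}" "y = \<gamma> e s"
      using edge(3) by (auto simp: subdiv_edge_map_def path_image_subpath_top)
    then have "s \<in> {0..1}"
      using unit_partition_mem[OF partition[OF edge(1)], of j] unit_partition_mem[OF partition[OF edge(1)], of "Suc j"] edge(2)
      by auto
    then have "s = 0 \<or> s = 1 \<or> s \<in> {0<..<1}" by auto
    then consider "s = 0" | "s = 1" | "s \<in> t e ` {1..k}" | "s \<in> {0<..<1} - t e ` {1..k}"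
      by (cases "s \<in> t e ` {1..k}") auto
    then show ?thesis
    proof cases
      case 1
      then have "y = \<phi>' (Inl (fst (ends e)))"
        using s(2) edge_start[OF edge(1)] by (simp add: subdiv_vertex_map_def)
      then show ?thesis using assms edge(1) by (auto simp: graph_def subdiv_V_def)
    next
      case 2
      then have "y = \<phi>' (Inl (snd (ends e)))"
        using s(2) edge_finish[OF edge(1)] by (simp add: subdiv_vertex_map_def)
      then show ?thesis using assms edge(1) by (auto simp: graph_def subdiv_V_def)
    next
      case 3
      then obtain i where "i \<in> {1..k}" "y = \<phi>' (Inr (e, i))"
        using s(2) by (auto simp: subdiv_vertex_map_def)
      then show ?thesis using edge(1) by (auto simp: subdiv_V_def)
    next
      case 4
      then show ?thesis using edge(1) s(2) by blast
    qed
  qed blast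
qed

lemma (in graph_embedded) exists_subdivision_through:
  assumes "graph V E ends" "finite Q" "card Q \<le> k"
  shows "\<exists>\<phi>' \<gamma>'. graph_embedding (subdiv_V V E k) (subdiv_E E k) (subdiv_ends ends k) X \<phi>' \<gamma>' \<and>
    (\<forall>q\<in>Q. q \<in> graph_image (subdiv_V V E k) (subdiv_E E k) \<phi>' \<gamma>' \<longrightarrow> q \<in> \<phi>' ` subdiv_V V E k)"
proof -
  define S where "S e = {s \<in> {0<..<1}. \<gamma> e s \<in> Q}" for e
  have "\<exists>t. unit_partition k t \<and> S e \<subseteq> t ` {1..k}" if e: "e \<in> E" for e
  proof (rule exists_unit_partition_through)
    have inj: "inj_on (\<gamma> e) (S e)"
      using simple_path_interior_eq[OF simple_edge[OF e]] by (auto simp: S_def inj_on_def)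
    have sub: "\<gamma> e ` S e \<subseteq> Q" by (auto simp: S_def)
    then have "finite (\<gamma> e ` S e)" using assms(2) finite_subset by blast
    then show "finite (S e)" using finite_imageD[OF _ inj] by blast
    show "card (S e) \<le> k" using card_inj_on_le[OF inj sub assms(2)] assms(3) by linarith
  qed (auto simp: S_def)
  then obtain t where t: "\<And>e. e \<in> E \<Longrightarrow> unit_partition k (t e) \<and> S e \<subseteq> t e ` {1..k}"
    by metis
  interpret graph_embedded_partitioned V E ends X \<phi> \<gamma> k t
    using t by unfold_locales blast
  have "q \<in> \<phi>' ` subdiv_V V E k"
    if q: "q \<in> Q" "q \<in> graph_image (subdiv_V V E k) (subdiv_E E k) \<phi>' \<gamma>'" for q
  proof (rule ccontr)
    assume "q \<notin> \<phi>' ` subdiv_V V E k"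
    then obtain e s where "e \<in> E" "s \<in> {0<..<1}" "s \<notin> t e ` {1..k}" "q = \<gamma> e s"
      using subdivision_graph_image[OF assms(1)] q(2) by blast
    moreover from this have "s \<in> S e" using q(1) by (simp add: S_def)
    ultimately show False using t by blast
  qed
  then show ?thesis using graph_embedding_subdivision by blast
qed

section \<open>Undoing a subdivision\<close>

lemma subdivided_edge_chain:
  assumes G: "graph V E ends"
    and emb: "graph_embedding (subdiv_V V E k) (subdiv_E E k) (subdiv_ends ends k) X \<phi>' \<gamma>'"
    and e: "e \<in> E"
  shows "simple_path (chain_join (\<lambda>j. \<gamma>' (e, j)) 0 k) \<and>
    pathstart (chain_join (\<lambda>j. \<gamma>' (e, j)) 0 k) = \<phi>' (Inl (fst (ends e))) \<and>
    pathfinish (chain_join (\<lambda>j. \<gamma>' (e, j)) 0 k) = \<phi>' (Inl (snd (ends e))) \<and>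
    path_image (chain_join (\<lambda>j. \<gamma>' (e, j)) 0 k) \<subseteq> X \<and>
    chain_join (\<lambda>j. \<gamma>' (e, j)) 0 k ` {0<..<1} \<subseteq>
      (\<Union>j\<le>k. \<gamma>' (e, j) ` {0<..<1}) \<union> (\<lambda>i. \<phi>' (Inr (e, i))) ` {1..k}"
proof -
  interpret S: graph_embedded "subdiv_V V E k" "subdiv_E E k" "subdiv_ends ends k" X \<phi>' \<gamma>'
    using emb by unfold_locales
  define p where "p j = \<phi>' (subdiv_pt ends k e j)" for j
  let ?c = "chain_join (\<lambda>j. \<gamma>' (e, j)) 0 k"
  have edge: "(e, j) \<in> subdiv_E E k" if "j \<le> k" for j
    using e that by (simp add: subdiv_E_def)
  have pt: "subdiv_pt ends k e j \<in> subdiv_V V E k" if "j \<le> Suc k" for j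
    by (rule subdiv_pt_in_subdiv_V[OF G e that])
  have "\<forall>j\<in>{0..0 + k}. simple_path (\<gamma>' (e, j)) \<and> pathstart (\<gamma>' (e, j)) = p j \<and>
      pathfinish (\<gamma>' (e, j)) = p (Suc j)"
  proof
    fix j assume "j \<in> {0..0 + k}"
    then have j: "(e, j) \<in> subdiv_E E k" using edge by simp
    show "simple_path (\<gamma>' (e, j)) \<and> pathstart (\<gamma>' (e, j)) = p j \<and> pathfinish (\<gamma>' (e, j)) = p (Suc j)"
      using S.simple_edge[OF j] S.edge_start[OF j] S.edge_finish[OF j]
      by (simp add: pathstart_def pathfinish_def subdiv_ends_def p_def)
  qed
  moreover have "\<forall>i\<in>{0..Suc (0 + k)}. \<forall>i'\<in>{0..Suc (0 + k)}. i < i' \<and> p i = p i' \<longrightarrow> i = 0 \<and> i' = Suc (0 + k)"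
  proof (intro ballI impI)
    fix i i' assume "i \<in> {0..Suc (0 + k)}" "i' \<in> {0..Suc (0 + k)}" and eq: "i < i' \<and> p i = p i'"
    then have "i \<le> Suc k" "i' \<le> Suc k" by simp_all
    moreover from this have "subdiv_pt ends k e i = subdiv_pt ends k e i'"
      using inj_onD[OF S.inj_vertices _ pt pt] eq by (simp add: p_def)
    ultimately show "i = 0 \<and> i' = Suc (0 + k)" using subdiv_pt_eq_iff[of i k i' ends e] eq by auto
  qed
  moreover have "\<forall>j\<in>{0..0 + k}. \<forall>j'\<in>{0..0 + k}. j \<noteq> j' \<longrightarrow>
      \<gamma>' (e, j) ` {0<..<1} \<inter> \<gamma>' (e, j') ` {0<..<1} = {}"
    using S.edge_interiors_disjoint[OF edge edge] by simp
  moreover have "\<forall>i\<in>{0..Suc (0 + k)}. \<forall>j\<in>{0..0 + k}. p i \<notin> \<gamma>' (e, j) ` {0<..<1}"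
    using S.edge_interior_avoids_vertices[OF edge] pt unfolding p_def by fastforce
  ultimately have "path_chain (\<lambda>j. \<gamma>' (e, j)) p 0 k"
    unfolding path_chain_def by (intro conjI)
  from simple_path_chain_join[OF this] chain_join_ends[OF this] chain_join_images[OF this]
  have chain: "simple_path ?c" "pathstart ?c = p 0" "pathfinish ?c = p (Suc k)"
    "path_image ?c = (\<Union>j\<le>k. \<gamma>' (e, j) ` {0<..<1}) \<union> p ` {0..Suc k}"
    "?c ` {0<..<1} = (\<Union>j\<le>k. \<gamma>' (e, j) ` {0<..<1}) \<union> p ` {1..k}"
    by (simp_all add: atMost_atLeast0 One_nat_def)
  have "pathstart ?c = \<phi>' (Inl (fst (ends e)))" "pathfinish ?c = \<phi>' (Inl (snd (ends e)))"
    using chain(2,3) by (simp_all add: p_def subdiv_pt_def)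
  moreover have "(\<Union>j\<le>k. \<gamma>' (e, j) ` {0<..<1}) \<subseteq> X"
    using S.edge_in edge by (intro UN_least) (force simp: path_image_def)
  moreover have "p ` {0..Suc k} \<subseteq> X"
    using S.vertices_in pt unfolding p_def by (intro image_subsetI) auto
  moreover have "p ` {1..k} = (\<lambda>i. \<phi>' (Inr (e, i))) ` {1..k}"
    unfolding p_def by (intro image_cong refl) (simp add: subdiv_pt_def)
  ultimately show ?thesis
    using chain(1,4,5) by simp
qed

lemma graph_embedding_of_subdivision:
  fixes V :: "'a set" and E :: "'e set" and X :: "'x::topological_space set"
  assumes G: "graph V E ends"
    and emb: "graph_embedding (subdiv_V V E k) (subdiv_E E k) (subdiv_ends ends k) X \<phi>' \<gamma>'"
  shows "graph_embedding V E ends X (\<phi>' \<circ> Inl) (\<lambda>e. chain_join (\<lambda>j. \<gamma>' (e, j)) 0 k)"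
proof -
  interpret S: graph_embedded "subdiv_V V E k" "subdiv_E E k" "subdiv_ends ends k" X \<phi>' \<gamma>'
    using emb by unfold_locales
  define I where "I e = (\<Union>j\<le>k. \<gamma>' (e, j) ` {0<..<1})" for e
  define W :: "'e \<Rightarrow> ('a + 'e \<times> nat) set" where "W e = (\<lambda>i. Inr (e, i)) ` {1..k}" for e
  have edge: "(e, j) \<in> subdiv_E E k" if "e \<in> E" "j \<le> k" for e j
    using that by (simp add: subdiv_E_def)
  have Inl_V: "Inl ` V \<subseteq> subdiv_V V E k" and W_V: "e \<in> E \<Longrightarrow> W e \<subseteq> subdiv_V V E k" for e
    by (auto simp: subdiv_V_def W_def)
  have I_avoids: "x \<notin> \<phi>' ` subdiv_V V E k" if e: "e \<in> E" and x: "x \<in> I e" for e x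
  proof -
    obtain j where "j \<le> k" "x \<in> \<gamma>' (e, j) ` {0<..<1}" using x by (auto simp: I_def)
    then show ?thesis using S.edge_interior_avoids_vertices[OF edge[OF e]] by (metis disjoint_iff)
  qed
  have I_disjoint: "x \<notin> I e'" if e: "e \<in> E" "e' \<in> E" "e \<noteq> e'" and x: "x \<in> I e" for e e' x
  proof
    assume "x \<in> I e'"
    then obtain j' where "j' \<le> k" "x \<in> \<gamma>' (e', j') ` {0<..<1}" by (auto simp: I_def)
    moreover obtain j where "j \<le> k" "x \<in> \<gamma>' (e, j) ` {0<..<1}" using x by (auto simp: I_def)
    ultimately show False
      using S.edge_interiors_disjoint[OF edge[OF e(1)] edge[OF e(2)]] e(3) by (metis disjoint_iff prod.inject)
  qed
  have W_apart: "\<phi>' ` W e \<inter> \<phi>' ` B = {}" if "e \<in> E" "B \<subseteq> subdiv_V V E k" "W e \<inter> B = {}" for e B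
    using inj_on_image_Int[OF S.inj_vertices W_V[OF that(1)] that(2)] that(3) by simp
  have interior_avoids: "(I e \<union> \<phi>' ` W e) \<inter> \<phi>' ` Inl ` V = {}" if "e \<in> E" for e
  proof -
    have "\<phi>' ` W e \<inter> \<phi>' ` Inl ` V = {}"
      using W_apart[OF that Inl_V] by (auto simp: W_def)
    moreover have "\<phi>' ` Inl ` V \<subseteq> \<phi>' ` subdiv_V V E k" using Inl_V by (rule image_mono)
    ultimately show ?thesis using I_avoids[OF that] by blast
  qed
  have interiors_disjoint: "(I e \<union> \<phi>' ` W e) \<inter> (I e' \<union> \<phi>' ` W e') = {}"
    if "e \<in> E" "e' \<in> E" "e \<noteq> e'" for e e'
  proof -
    have sets: "(A \<union> B) \<inter> (C \<union> D) = {}"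
      if "B \<inter> D = {}" "B \<subseteq> P" "D \<subseteq> P" "\<And>x. x \<in> A \<Longrightarrow> x \<notin> P"
        "\<And>x. x \<in> C \<Longrightarrow> x \<notin> P" "\<And>x. x \<in> A \<Longrightarrow> x \<notin> C" for A B C D P :: "'x set"
      using that by blast
    have "\<phi>' ` W e \<inter> \<phi>' ` W e' = {}"
      using W_apart[OF that(1) W_V[OF that(2)]] that(3) by (auto simp: W_def)
    moreover have "\<phi>' ` W e \<subseteq> \<phi>' ` subdiv_V V E k" "\<phi>' ` W e' \<subseteq> \<phi>' ` subdiv_V V E k"
      using image_mono[OF W_V[OF that(1)]] image_mono[OF W_V[OF that(2)]] .
    ultimately show ?thesis
      by (rule sets[OF _ _ _ I_avoids[OF that(1)] I_avoids[OF that(2)] I_disjoint[OF that]])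
  qed
  define \<gamma> where "\<gamma> = (\<lambda>e. chain_join (\<lambda>j. \<gamma>' (e, j)) 0 k)"
  have chain: "simple_path (\<gamma> e)" "pathstart (\<gamma> e) = \<phi>' (Inl (fst (ends e)))"
      "pathfinish (\<gamma> e) = \<phi>' (Inl (snd (ends e)))" "path_image (\<gamma> e) \<subseteq> X"
      "\<gamma> e ` {0<..<1} \<subseteq> I e \<union> \<phi>' ` W e" if "e \<in> E" for e
    using subdivided_edge_chain[OF G emb that] by (simp_all add: \<gamma>_def I_def W_def image_image)
  have disjoint_subsets: "A \<inter> C = {}" if "A \<subseteq> B" "C \<subseteq> D" "B \<inter> D = {}" for A B C D :: "'x set"
    using that by blast
  have "graph_embedding V E ends X (\<phi>' \<circ> Inl) \<gamma>"
    unfolding graph_embedding_def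
  proof (intro conjI ballI impI)
    show "(\<phi>' \<circ> Inl) ` V \<subseteq> X" using S.vertices_in Inl_V by auto
    show "inj_on (\<phi>' \<circ> Inl) V"
      using comp_inj_on[OF inj_Inl inj_on_subset[OF S.inj_vertices Inl_V]] .
  next
    fix e assume e: "e \<in> E"
    show "simple_path (\<gamma> e)" "path_image (\<gamma> e) \<subseteq> X"
      "pathstart (\<gamma> e) = (\<phi>' \<circ> Inl) (fst (ends e))" "pathfinish (\<gamma> e) = (\<phi>' \<circ> Inl) (snd (ends e))"
      using chain[OF e] by simp_all
    show "\<gamma> e ` {0<..<1} \<inter> (\<phi>' \<circ> Inl) ` V = {}"
      unfolding image_comp[symmetric] by (rule disjoint_subsets[OF chain(5)[OF e] subset_refl interior_avoids[OF e]])
  next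
    fix e e' assume "e \<in> E" "e' \<in> E" "e \<noteq> e'"
    then show "\<gamma> e ` {0<..<1} \<inter> \<gamma> e' ` {0<..<1} = {}"
      using disjoint_subsets[OF chain(5) chain(5) interiors_disjoint] by blast
  qed
  then show ?thesis by (simp add: \<gamma>_def)
qed

lemma finite_nodes: "two_complex C \<Longrightarrow> finite (nodes C)"
proof -
  assume C: "two_complex C"
  have "(\<lambda>p. {p}) ` nodes C \<subseteq> C" by (auto simp: nodes_def)
  then have "finite ((\<lambda>p. {p}) ` nodes C)" using C finite_subset by (auto simp: two_complex_def)
  then show ?thesis by (rule finite_imageD) (simp add: inj_on_def)
qed

theorem mainTheorem5:
  fixes C :: "'v set set"
    and V :: "'a set" and E :: "'e set" and ends :: "'e \<Rightarrow> 'a \<times> 'a"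
  assumes "two_complex C" and "\<not> has_3book C"
    and "graph V E ends"
  defines "k \<equiv> card (singular_nodes C)"
  shows "(\<exists>\<phi> \<gamma>. graph_embedding V E ends (realization C) \<phi> \<gamma>) \<longleftrightarrow>
         (\<exists>\<phi>' \<gamma>'. graph_embedding (subdiv_V V E k) (subdiv_E E k) (subdiv_ends ends k)
                      (realization C) \<phi>' \<gamma>' \<and>
            (\<forall>p\<in>singular_nodes C.
               node_point p \<in> graph_image (subdiv_V V E k) (subdiv_E E k) \<phi>' \<gamma>' \<longrightarrow>
               node_point p \<in> \<phi>' ` subdiv_V V E k))"
proof
  assume "\<exists>\<phi> \<gamma>. graph_embedding V E ends (realization C) \<phi> \<gamma>"
  then obtain \<phi> \<gamma> where "graph_embedding V E ends (realization C) \<phi> \<gamma>" by blast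
  then interpret graph_embedded V E ends "realization C" \<phi> \<gamma> by unfold_locales
  have "finite (singular_nodes C)"
    using finite_nodes[OF assms(1)] by (simp add: singular_nodes_def)
  then have "finite (node_point ` singular_nodes C)" "card (node_point ` singular_nodes C) \<le> k"
    unfolding k_def by (simp_all add: card_image_le)
  from exists_subdivision_through[OF assms(3) this]
  show "\<exists>\<phi>' \<gamma>'. graph_embedding (subdiv_V V E k) (subdiv_E E k) (subdiv_ends ends k)
      (realization C) \<phi>' \<gamma>' \<and>
    (\<forall>p\<in>singular_nodes C.
       node_point p \<in> graph_image (subdiv_V V E k) (subdiv_E E k) \<phi>' \<gamma>' \<longrightarrow>
       node_point p \<in> \<phi>' ` subdiv_V V E k)"
    by blast
next
  assume "\<exists>\<phi>' \<gamma>'. graph_embedding (subdiv_V V E k) (subdiv_E E k) (subdiv_ends ends k)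
      (realization C) \<phi>' \<gamma>' \<and>
    (\<forall>p\<in>singular_nodes C.
       node_point p \<in> graph_image (subdiv_V V E k) (subdiv_E E k) \<phi>' \<gamma>' \<longrightarrow>
       node_point p \<in> \<phi>' ` subdiv_V V E k)"
  then show "\<exists>\<phi> \<gamma>. graph_embedding V E ends (realization C) \<phi> \<gamma>"
    using graph_embedding_of_subdivision[OF assms(3)] by blast
qed

end
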